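(* In the 3-body problem in ${\bf H}^2$ with masses $m_1,m_2,m_3>0$, fix $z>1$ and $\rho=(z^2-1)^{1/2}$. There exists $\omega\ne0$ such that ${\bf q}_i(t)=(\rho\cos(\omega t+\alpha_i),\rho\sin(\omega t+\alpha_i),z)$ with $\alpha_1=0,\alpha_2=2\pi/3,\alpha_3=4\pi/3$ is a solution of the equations of motion (the equilateral triangle rotating in its own plane $z=$ constant as an elliptic relative equilibrium) if and only if $m_1=m_2=m_3$.
   Context: The $n$-body problem in ${\bf H}^2$ (Weierstrass model): with the Lorentz inner product ${\bf a}\boxdot{\bf b}=a_xb_x+a_yb_y-a_zb_z$ on $\mathbb R^3$, ${\bf H}^2=\{(x,y,z): x^2+y^2-z^2=-1,\ z>0\}$. Bodies of masses $m_1,\dots,m_n>0$ have positions ${\bf q}_i=(x_i,y_i,z_i)\in{\bf H}^2$ and satisfy $$\ddot{\bf q}_i=\sum_{j\ne i}\frac{m_j[{\bf q}_j+({\bf q}_i\boxdot{\bf q}_j){\bf q}_i]}{[({\bf q}_i\boxdot{\bf q}_j)^2-1]^{3/2}}+(\dot{\bf q}_i\boxdot\dot{\bf q}_i){\bf q}_i,\qquad {\bf q}_i\boxdot{\bf q}_i=-1,\ \ {\bf q}_i\boxdot\dot{\bf q}_i=0,$$ $i=1,\dots,n$, defined only for collisionless configurations (${\bf q}_i\ne{\bf q}_j$ for $i\ne j$). *)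

theory Defs
  imports "HOL-Analysis.Analysis"
begin

definition lorentz :: "real \<times> real \<times> real \<Rightarrow> real \<times> real \<times> real \<Rightarrow> real" where
  "lorentz a b = fst a * fst b + fst (snd a) * fst (snd b) - snd (snd a) * snd (snd b)"

definition H2 :: "(real \<times> real \<times> real) set" where
  "H2 = {p. lorentz p p = -1 \<and> snd (snd p) > 0}"

definition nbody_rhs :: "nat \<Rightarrow> (nat \<Rightarrow> real) \<Rightarrow> (nat \<Rightarrow> real \<times> real \<times> real)
    \<Rightarrow> (nat \<Rightarrow> real \<times> real \<times> real) \<Rightarrow> nat \<Rightarrow> real \<times> real \<times> real" where
  "nbody_rhs n m q v i =
     (\<Sum>j\<in>{0..<n} - {i}.
        (m j / ((lorentz (q i) (q j))\<^sup>2 - 1) powr (3/2)) *\<^sub>R (q j + lorentz (q i) (q j) *\<^sub>R q i))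
     + lorentz (v i) (v i) *\<^sub>R q i"

definition is_nbody_solution :: "nat \<Rightarrow> (nat \<Rightarrow> real) \<Rightarrow> (nat \<Rightarrow> real \<Rightarrow> real \<times> real \<times> real) \<Rightarrow> bool" where
  "is_nbody_solution n m q \<longleftrightarrow>
     (\<exists>v :: nat \<Rightarrow> real \<Rightarrow> real \<times> real \<times> real.
        \<forall>t. (\<forall>i<n. q i t \<in> H2
                 \<and> lorentz (q i t) (v i t) = 0
                 \<and> (q i has_vector_derivative v i t) (at t)
                 \<and> (v i has_vector_derivative
                       nbody_rhs n m (\<lambda>k. q k t) (\<lambda>k. v k t) i) (at t))
           \<and> (\<forall>i<n. \<forall>j<n. i \<noteq> j \<longrightarrow> q i t \<noteq> q j t))"

end

theory Submission
  imports Defs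
begin

text \<open>
  The rotating equilateral triangle q_i(t) = (r cos(wt + 2 pi i/3), r sin(wt + 2 pi i/3), z)
  with r^2 = z^2 - 1 lies on H^2, has velocity tangent to H^2, constant speed r|w|, and
  centripetal acceleration -w^2 q_i + (0,0,w^2 z).  Because the phases are the three cube
  roots of unity, the three positions sum to (0,0,3z) and any two bodies have the same
  Lorentz product -c with c = r^2/2 + z^2 > 1 (so there are no collisions).
  Hence the right-hand side of the equations of motion for body i is
  (sum over j ~= i of m_j/D (q_j - c q_i)) + r^2 w^2 q_i  with  D = (c^2 - 1)^(3/2).
  Necessity: the third component of the acceleration vanishes, so the total mass of the
  two other bodies is the same for every i, which forces equal masses.
  Sufficiency: for equal masses mu the force sum equals mu/D ((0,0,3z) - (1 + 2c) q_i),
  and with w^2 = 3 mu/D this is exactly the centripetal acceleration.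
\<close>

text \<open>The phase of body i; the offsets 2 pi i/3 are the arguments of the cube roots of unity.\<close>
definition phase :: "real \<Rightarrow> nat \<Rightarrow> real \<Rightarrow> real" where
  "phase w i t = w * t + 2 * pi * real i / 3"

lemma cos_sin_240: "cos (4 * pi / 3) = - 1 / 2" "sin (4 * pi / 3) = - sqrt 3 / 2"
proof -
  have "4 * pi / 3 = pi / 3 + pi" by simp
  then show "cos (4 * pi / 3) = - 1 / 2" "sin (4 * pi / 3) = - sqrt 3 / 2"
    by (simp_all only: cos_periodic_pi sin_periodic_pi cos_60 sin_60)
qed

lemma less_3_cases: "(i::nat) < 3 \<Longrightarrow> i = 0 \<or> i = 1 \<or> i = 2"
  by auto

lemma sum_lessThan_3: "(\<Sum>j<3. f j) = f 0 + f 1 + f (2::nat)"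
  by (simp add: eval_nat_numeral)

lemma phase_0_1_2:
  "phase w 0 t = w * t" "phase w 1 t = w * t + 2 * pi / 3" "phase w 2 t = w * t + 4 * pi / 3"
  by (simp_all add: phase_def)

text \<open>The cube roots of unity sum to zero.\<close>
lemma sum_cos_phase: "(\<Sum>j<3. cos (phase w j t)) = 0"
  and sum_sin_phase: "(\<Sum>j<3. sin (phase w j t)) = 0"
  unfolding sum_lessThan_3 phase_0_1_2 cos_add sin_add cos_120 sin_120 cos_sin_240
  by (simp_all add: algebra_simps)

text \<open>Two distinct cube roots of unity enclose the angle 2 pi/3.\<close>
lemma cos_phase_diff:
  assumes "i < 3" "j < 3" "i \<noteq> j"
  shows "cos (phase w i t) * cos (phase w j t) + sin (phase w i t) * sin (phase w j t) = - 1 / 2"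
proof -
  have "cos (phase w i t) * cos (phase w j t) + sin (phase w i t) * sin (phase w j t)
      = cos (2 * pi * real i / 3 - 2 * pi * real j / 3)"
    by (simp add: cos_diff [symmetric] phase_def)
  also have "\<dots> = - 1 / 2"
    using less_3_cases [OF assms(1)] less_3_cases [OF assms(2)] assms(3)
    by (auto simp: cos_diff cos_120 sin_120 cos_sin_240)
  finally show ?thesis .
qed

definition tri :: "real \<Rightarrow> real \<Rightarrow> real \<Rightarrow> nat \<Rightarrow> real \<Rightarrow> real \<times> real \<times> real" where
  "tri r z w i t = (r * cos (phase w i t), r * sin (phase w i t), z)"

definition tri_vel :: "real \<Rightarrow> real \<Rightarrow> nat \<Rightarrow> real \<Rightarrow> real \<times> real \<times> real" where
  "tri_vel r w i t = (- r * w * sin (phase w i t), r * w * cos (phase w i t), 0)"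

lemma tri_has_derivative: "(tri r z w i has_vector_derivative tri_vel r w i t) (at t)"
  unfolding tri_def tri_vel_def phase_def
  by (intro has_vector_derivative_Pair has_vector_derivative_const)
     (auto intro!: derivative_eq_intros simp: has_real_derivative_iff_has_vector_derivative [symmetric])

lemma tri_vel_has_derivative:
  "(tri_vel r w i has_vector_derivative (- (w\<^sup>2)) *\<^sub>R tri r z w i t + (0, 0, w\<^sup>2 * z)) (at t)"
proof -
  have "(tri_vel r w i has_vector_derivative
          (- r * w\<^sup>2 * cos (phase w i t), - r * w\<^sup>2 * sin (phase w i t), 0)) (at t)"
    unfolding tri_vel_def phase_def
    by (intro has_vector_derivative_Pair has_vector_derivative_const)
       (auto intro!: derivative_eq_intros
         simp: has_real_derivative_iff_has_vector_derivative [symmetric] power2_eq_square)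
  then show ?thesis by (simp add: tri_def algebra_simps)
qed

lemma sum_tri: "(\<Sum>j<3. tri r z w j t) = (0, 0, 3 * z)"
proof -
  have "(\<Sum>j<3. tri r z w j t)
      = (r * (\<Sum>j<3. cos (phase w j t)), r * (\<Sum>j<3. sin (phase w j t)), 3 * z)"
    unfolding sum_lessThan_3 by (simp add: tri_def distrib_left)
  then show ?thesis by (simp only: sum_cos_phase sum_sin_phase mult_zero_right)
qed

lemma tri_in_H2:
  assumes "r\<^sup>2 = z\<^sup>2 - 1" "z > 0"
  shows "tri r z w i t \<in> H2"
proof -
  have "lorentz (tri r z w i t) (tri r z w i t)
      = r\<^sup>2 * ((sin (phase w i t))\<^sup>2 + (cos (phase w i t))\<^sup>2) - z\<^sup>2"
    unfolding lorentz_def tri_def fst_conv snd_conv by algebra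
  then show ?thesis using assms by (simp add: H2_def tri_def)
qed

lemma tri_vel_tangent: "lorentz (tri r z w i t) (tri_vel r w i t) = 0"
  by (simp add: lorentz_def tri_def tri_vel_def algebra_simps)

lemma tri_vel_speed: "lorentz (tri_vel r w i t) (tri_vel r w i t) = r\<^sup>2 * w\<^sup>2"
proof -
  have "lorentz (tri_vel r w i t) (tri_vel r w i t)
      = r\<^sup>2 * w\<^sup>2 * ((sin (phase w i t))\<^sup>2 + (cos (phase w i t))\<^sup>2)"
    unfolding lorentz_def tri_vel_def fst_conv snd_conv by algebra
  then show ?thesis by simp
qed

lemma tri_mutual_lorentz:
  assumes "i < 3" "j < 3" "i \<noteq> j"
  shows "lorentz (tri r z w i t) (tri r z w j t) = - (r\<^sup>2 / 2 + z\<^sup>2)"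
proof -
  have "lorentz (tri r z w i t) (tri r z w j t)
      = r\<^sup>2 * (cos (phase w i t) * cos (phase w j t) + sin (phase w i t) * sin (phase w j t)) - z\<^sup>2"
    by (simp add: lorentz_def tri_def power2_eq_square algebra_simps)
  then show ?thesis by (simp add: cos_phase_diff [OF assms])
qed

text \<open>Along the triangle the force of body j on body i has the same scalar factor for all
  pairs, so the right-hand side of the equations of motion is explicit.\<close>
lemma nbody_rhs_tri:
  assumes "i < 3" and "v i = tri_vel r w i t"
  shows "nbody_rhs 3 m (\<lambda>k. tri r z w k t) v i
       = (\<Sum>j\<in>{0..<3} - {i}. (m j / ((r\<^sup>2 / 2 + z\<^sup>2)\<^sup>2 - 1) powr (3/2))
                               *\<^sub>R (tri r z w j t - (r\<^sup>2 / 2 + z\<^sup>2) *\<^sub>R tri r z w i t))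
         + (r\<^sup>2 * w\<^sup>2) *\<^sub>R tri r z w i t"
  unfolding nbody_rhs_def assms(2) tri_vel_speed
proof (intro arg_cong2 [where f = "(+)"] sum.cong refl)
  fix j assume "j \<in> {0..<3} - {i}"
  then have "j < 3" "i \<noteq> j" by auto
  then have "lorentz (tri r z w i t) (tri r z w j t) = - (r\<^sup>2 / 2 + z\<^sup>2)"
    by (rule tri_mutual_lorentz [OF assms(1)])
  then show "(m j / ((lorentz (tri r z w i t) (tri r z w j t))\<^sup>2 - 1) powr (3/2))
               *\<^sub>R (tri r z w j t + lorentz (tri r z w i t) (tri r z w j t) *\<^sub>R tri r z w i t)
           = (m j / ((r\<^sup>2 / 2 + z\<^sup>2)\<^sup>2 - 1) powr (3/2))
               *\<^sub>R (tri r z w j t - (r\<^sup>2 / 2 + z\<^sup>2) *\<^sub>R tri r z w i t)"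
    by (simp only: power2_minus scaleR_minus_left flip: diff_conv_add_uminus)
qed

text \<open>The common mutual Lorentz product -c satisfies c > 1: the bodies are pairwise at
  positive hyperbolic distance, and the force factor D = (c^2 - 1)^(3/2) is positive.\<close>
lemma mutual_product_gt_1:
  fixes r z :: real
  assumes "r\<^sup>2 = z\<^sup>2 - 1" and "z > 1"
  shows "r\<^sup>2 / 2 + z\<^sup>2 > 1"
proof -
  have "1 < z\<^sup>2" using assms(2) by (intro one_less_power) auto
  then show ?thesis unfolding assms(1) by (simp add: field_simps)
qed

lemma equal_masses_of_equal_partial_sums:
  fixes m :: "nat \<Rightarrow> real"
  assumes "\<And>i. i < 3 \<Longrightarrow> (\<Sum>j\<in>{0..<3} - {i}. m j) = K"
  shows "m 0 = m 1 \<and> m 1 = m 2"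
proof -
  have "{0..<3::nat} - {0} = {1, 2}" "{0..<3::nat} - {1} = {0, 2}" "{0..<3::nat} - {2} = {0, 1}"
    by auto
  then show ?thesis using assms [of 0] assms [of 1] assms [of 2] by simp
qed

lemma rotating_triangle_equal_masses:
  assumes r2: "r\<^sup>2 = z\<^sup>2 - 1" and z: "z > 1"
    and sol: "is_nbody_solution 3 m (tri r z w)"
  shows "m 0 = m 1 \<and> m 1 = m 2"
proof -
  define c where "c = r\<^sup>2 / 2 + z\<^sup>2"
  define D where "D = (c\<^sup>2 - 1) powr (3/2)"
  have c: "c > 1" unfolding c_def using r2 z by (rule mutual_product_gt_1)
  have "1 < c\<^sup>2" using c by (simp add: one_less_power)
  then have D: "D > 0" unfolding D_def by simp
  obtain v where
    dq: "\<And>t i. i < 3 \<Longrightarrow> (tri r z w i has_vector_derivative v i t) (at t)" and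
    dv: "\<And>t i. i < 3 \<Longrightarrow>
           (v i has_vector_derivative nbody_rhs 3 m (\<lambda>k. tri r z w k t) (\<lambda>k. v k t) i) (at t)"
    using sol unfolding is_nbody_solution_def by blast
  have v: "\<And>i. i < 3 \<Longrightarrow> v i = tri_vel r w i"
    using dq tri_has_derivative vector_derivative_unique_at by blast
  text \<open>The vertical component of the equation of motion for body i.\<close>
  have "(\<Sum>j\<in>{0..<3} - {i}. m j) = - r\<^sup>2 * w\<^sup>2 * D / (1 - c)" if i: "i < 3" for i
  proof -
    have "(tri_vel r w i has_vector_derivative
             nbody_rhs 3 m (\<lambda>k. tri r z w k 0) (\<lambda>k. v k 0) i) (at 0)"
      using dv [OF i, of 0] v [OF i] by simp
    then have "(- (w\<^sup>2)) *\<^sub>R tri r z w i 0 + (0, 0, w\<^sup>2 * z)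
        = nbody_rhs 3 m (\<lambda>k. tri r z w k 0) (\<lambda>k. v k 0) i"
      by (rule vector_derivative_unique_at [OF tri_vel_has_derivative])
    also have "\<dots> = (\<Sum>j\<in>{0..<3} - {i}. (m j / D) *\<^sub>R (tri r z w j 0 - c *\<^sub>R tri r z w i 0))
                     + (r\<^sup>2 * w\<^sup>2) *\<^sub>R tri r z w i 0"
      unfolding c_def D_def by (rule nbody_rhs_tri [OF i]) (simp add: v [OF i])
    finally have "0 = (\<Sum>j\<in>{0..<3} - {i}. m j / D * (z - c * z)) + r\<^sup>2 * w\<^sup>2 * z"
      by (subst (asm) prod_eq_iff) (simp add: prod_eq_iff tri_def snd_sum)
    also have "(\<Sum>j\<in>{0..<3} - {i}. m j / D * (z - c * z))
             = z * (1 - c) / D * (\<Sum>j\<in>{0..<3} - {i}. m j)"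
      unfolding sum_distrib_left by (rule sum.cong) (simp_all add: field_simps)
    finally have "z * ((1 - c) / D * (\<Sum>j\<in>{0..<3} - {i}. m j) + r\<^sup>2 * w\<^sup>2) = 0"
      by (simp add: algebra_simps)
    then have "(1 - c) / D * (\<Sum>j\<in>{0..<3} - {i}. m j) + r\<^sup>2 * w\<^sup>2 = 0"
      using z by simp
    moreover have "1 - c \<noteq> 0" using c by simp
    ultimately show ?thesis using D by (simp add: field_simps)
  qed
  then show ?thesis by (rule equal_masses_of_equal_partial_sums)
qed

lemma force_on_equal_mass_triangle:
  assumes "i < 3" and "\<And>j. j < 3 \<Longrightarrow> m j = \<mu>"
  shows "(\<Sum>j\<in>{0..<3} - {i}. (m j / D) *\<^sub>R (tri r z w j t - c *\<^sub>R tri r z w i t))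
       = (\<mu> / D) *\<^sub>R ((0, 0, 3 * z) - (1 + 2 * c) *\<^sub>R tri r z w i t)"
proof -
  have others: "{0..<3} - {i} = {..<3} - {i}" and card: "card ({..<3} - {i}) = 2"
    using assms(1) by auto
  have "(\<Sum>j\<in>{0..<3} - {i}. (m j / D) *\<^sub>R (tri r z w j t - c *\<^sub>R tri r z w i t))
      = (\<mu> / D) *\<^sub>R (\<Sum>j\<in>{..<3} - {i}. tri r z w j t - c *\<^sub>R tri r z w i t)"
    unfolding others scaleR_sum_right using assms(2) by (intro sum.cong) auto
  also have "\<dots> = (\<mu> / D) *\<^sub>R ((\<Sum>j\<in>{..<3} - {i}. tri r z w j t)
                                - (\<Sum>j\<in>{..<3} - {i}. c *\<^sub>R tri r z w i t))"
    by (simp only: sum_subtractf)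
  also have "(\<Sum>j\<in>{..<3} - {i}. tri r z w j t) = (\<Sum>j<3. tri r z w j t) - tri r z w i t"
    using assms(1) by (simp add: sum_diff1)
  also have "(\<Sum>j\<in>{..<3} - {i}. c *\<^sub>R tri r z w i t) = (2 * c) *\<^sub>R tri r z w i t"
    by (simp add: real_vector.sum_constant_scale card)
  finally show ?thesis by (simp add: sum_tri algebra_simps)
qed

lemma equal_mass_rotating_triangle:
  assumes r2: "r\<^sup>2 = z\<^sup>2 - 1" and z: "z > 1"
    and \<mu>: "\<mu> > 0" and m: "\<And>j. j < 3 \<Longrightarrow> m j = \<mu>"
  shows "\<exists>w. w \<noteq> 0 \<and> is_nbody_solution 3 m (tri r z w)"
proof -
  define c where "c = r\<^sup>2 / 2 + z\<^sup>2"
  define D where "D = (c\<^sup>2 - 1) powr (3/2)"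
  have c: "c > 1" unfolding c_def using r2 z by (rule mutual_product_gt_1)
  have "1 < c\<^sup>2" using c by (simp add: one_less_power)
  then have D: "D > 0" unfolding D_def by simp
  define w where "w = sqrt (3 * \<mu> / D)"
  have w2: "w\<^sup>2 = 3 * \<mu> / D" and w: "w \<noteq> 0"
    unfolding w_def using \<mu> D by simp_all
  have "is_nbody_solution 3 m (tri r z w)"
    unfolding is_nbody_solution_def
  proof (intro exI [of _ "tri_vel r w"] allI conjI impI)
    fix t i assume i: "i < (3::nat)"
    show "tri r z w i t \<in> H2" using r2 z by (simp add: tri_in_H2)
    show "lorentz (tri r z w i t) (tri_vel r w i t) = 0" by (rule tri_vel_tangent)
    show "(tri r z w i has_vector_derivative tri_vel r w i t) (at t)" by (rule tri_has_derivative)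
    have "(- (w\<^sup>2)) *\<^sub>R tri r z w i t + (0, 0, w\<^sup>2 * z)
        = (\<mu> / D) *\<^sub>R ((0, 0, 3 * z) - (1 + 2 * c) *\<^sub>R tri r z w i t)
          + (r\<^sup>2 * w\<^sup>2) *\<^sub>R tri r z w i t"
      using D by (simp add: w2 c_def r2 prod_eq_iff field_simps)
    also have "\<dots> = (\<Sum>j\<in>{0..<3} - {i}. (m j / D) *\<^sub>R (tri r z w j t - c *\<^sub>R tri r z w i t))
                     + (r\<^sup>2 * w\<^sup>2) *\<^sub>R tri r z w i t"
      by (simp only: force_on_equal_mass_triangle [OF i m])
    also have "\<dots> = nbody_rhs 3 m (\<lambda>k. tri r z w k t) (\<lambda>k. tri_vel r w k t) i"
      unfolding c_def D_def by (rule nbody_rhs_tri [OF i, symmetric]) simp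
    finally show "(tri_vel r w i has_vector_derivative
                    nbody_rhs 3 m (\<lambda>k. tri r z w k t) (\<lambda>k. tri_vel r w k t) i) (at t)"
      using tri_vel_has_derivative by metis
  next
    fix t i j assume "i < (3::nat)" "j < 3" "i \<noteq> j"
    then have "lorentz (tri r z w i t) (tri r z w j t) = - c"
      unfolding c_def by (rule tri_mutual_lorentz)
    moreover have "lorentz (tri r z w i t) (tri r z w i t) = -1"
      using tri_in_H2 [OF r2] z by (simp add: H2_def)
    ultimately show "tri r z w i t \<noteq> tri r z w j t" using c by auto
  qed
  with w show ?thesis by blast
qed

theorem mainTheorem14:
  fixes m :: "nat \<Rightarrow> real" and z :: real
  assumes "m 0 > 0" and "m 1 > 0" and "m 2 > 0"
    and "z > 1"
  shows "(\<exists>\<omega>::real. \<omega> \<noteq> 0 \<and>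
            is_nbody_solution 3 m
              (\<lambda>i t. (sqrt (z\<^sup>2 - 1) * cos (\<omega> * t + 2 * pi * real i / 3),
                      sqrt (z\<^sup>2 - 1) * sin (\<omega> * t + 2 * pi * real i / 3), z)))
         \<longleftrightarrow> (m 0 = m 1 \<and> m 1 = m 2)"
proof -
  define r where "r = sqrt (z\<^sup>2 - 1)"
  have "1 < z\<^sup>2" using assms(4) by (simp add: one_less_power)
  then have r2: "r\<^sup>2 = z\<^sup>2 - 1" unfolding r_def by simp
  have triangle: "\<And>\<omega>. (\<lambda>i t. (sqrt (z\<^sup>2 - 1) * cos (\<omega> * t + 2 * pi * real i / 3),
                             sqrt (z\<^sup>2 - 1) * sin (\<omega> * t + 2 * pi * real i / 3), z))
                    = tri r z \<omega>"
    by (simp add: fun_eq_iff tri_def phase_def r_def)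
  show ?thesis unfolding triangle
  proof
    assume "\<exists>\<omega>. \<omega> \<noteq> 0 \<and> is_nbody_solution 3 m (tri r z \<omega>)"
    then show "m 0 = m 1 \<and> m 1 = m 2"
      using rotating_triangle_equal_masses [OF r2 assms(4)] by blast
  next
    assume "m 0 = m 1 \<and> m 1 = m 2"
    then have "\<And>j. j < 3 \<Longrightarrow> m j = m 0" by (metis less_3_cases)
    then show "\<exists>\<omega>. \<omega> \<noteq> 0 \<and> is_nbody_solution 3 m (tri r z \<omega>)"
      using equal_mass_rotating_triangle [OF r2 assms(4) assms(1)] by blast
  qed
qed

end
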